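(* Let $p$ be holomorphic and not constant on a neighborhood $\mathcal{B}$ of $z_0\in\mathbb{C}$, with $p(z)=p(z_0)-p_0(z-z_0)^\mu(1-\phi(z))$ on $\mathcal{B}$, $\mu\in\mathbb{Z}_{\ge1}$, $p_0\neq0$, $\phi$ holomorphic, $\phi(z_0)=0$. Let $\omega_0=\arg p_0$, $\theta_\ell=-\omega_0/\mu+2\pi\ell/\mu$, and let $R_p>0$ and the functions $f_\ell$ ($\ell\in\mathbb{Z}$) be as described in the context. Then $$f_{2\ell-1}(r)<\theta_\ell<f_{2\ell}(r)\quad\text{for all } r\in[0,R_p],\ \ell\in\mathbb{Z},$$ and $$\mathrm{Re}\big(p(z_0+re^{i\theta_\ell})-p(z_0)\big)<0\quad\text{for all } r\in(0,R_p],\ \ell\in\mathbb{Z}.$$ More generally, for every $r\in(0,R_p]$, one has $\mathrm{Re}\big(p(z_0+re^{i\theta})-p(z_0)\big)<0$ if and only if $f_{2\ell-1}(r)<\theta<f_{2\ell}(r)$ for some $\ell\in\mathbb{Z}$.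
   Context: $R_p>0$ is such that the closed disk of radius $R_p$ about $z_0$ lies in $\mathcal{B}$, and with $\delta_\ell=-\omega_0/\mu+\pi(\ell+1/2)/\mu$: all solutions $(r,\theta)$, $r\in[0,R_p]$, of $\mathrm{Re}\big(p(z_0+re^{i\theta})-p(z_0)\big)/r^\mu=0$ (at $r=0$ meaning $-|p_0|\cos(\omega_0+\mu\theta)=0$) are exactly the pairs $(r,f_\ell(r))$, $\ell\in\mathbb{Z}$, where each $f_\ell$ is differentiable on an interval containing $[0,R_p]$, $f_\ell(0)=\delta_\ell$ and $|f_\ell(r)-\delta_\ell|\le\pi/(4\mu)$ for $r\in[0,R_p]$. $\arg$ takes values in $(-\pi,\pi]$. *)

theory Defs
  imports "HOL-Complex_Analysis.Complex_Analysis"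
begin

definition rescaled_re ::
  "(complex \<Rightarrow> complex) \<Rightarrow> complex \<Rightarrow> complex \<Rightarrow> nat \<Rightarrow> real \<Rightarrow> real \<Rightarrow> real" where
  "rescaled_re p z0 p0 \<mu> r \<theta> =
     (if r = 0 then - cmod p0 * cos (Arg p0 + real \<mu> * \<theta>)
      else Re (p (z0 + complex_of_real r * exp (\<i> * complex_of_real \<theta>)) - p z0) / r ^ \<mu>)"

end

theory Submission
  imports Defs
begin

(* Write g(r, theta) for the rescaled real part. The factorisation
   p z - p z0 = - p0 (z - z0)^mu (1 - phi z) shows that g is jointly continuous on
   [0, R] x R, with g(0, theta) = - |p0| cos(omega0 + mu theta). The band condition on the
   zero curves puts theta_k = - omega0/mu + k pi/mu strictly between f_(k-1)(r) and f_k(r),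
   so g(., theta_k) never vanishes on [0, R] and keeps the sign of - cos(k pi): negative
   exactly for even k. For fixed r the zeros of g(r, .) are the increasing values f_l(r), so
   by the intermediate value theorem g(r, .) has on each gap the sign it has at the theta_k
   inside it, and the negative gaps are exactly those of the form (f_(2l-1)(r), f_(2l)(r)). *)

lemma continuous_on_nonzero_neg_iff:
  fixes h :: "'a::linear_continuum_topology \<Rightarrow> real"
  assumes "continuous_on {x..y} h" "x \<le> y" "\<And>s. s \<in> {x..y} \<Longrightarrow> h s \<noteq> 0"
  shows "h x < 0 \<longleftrightarrow> h y < 0"
proof
  assume "h x < 0"
  show "h y < 0"
  proof (rule ccontr)
    assume "\<not> h y < 0"
    with IVT'[of h x 0 y] \<open>h x < 0\<close> assms(1,2) obtain s where "s \<in> {x..y}" "h s = 0" by auto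
    with assms(3) show False by blast
  qed
next
  assume "h y < 0"
  show "h x < 0"
  proof (rule ccontr)
    assume "\<not> h x < 0"
    with IVT2'[of h y 0 x] \<open>h y < 0\<close> assms(1,2) obtain s where "s \<in> {x..y}" "h s = 0" by auto
    with assms(3) show False by blast
  qed
qed

lemma strict_mono_no_value_between:
  fixes F :: "int \<Rightarrow> 'a::linorder"
  assumes "strict_mono F"
  shows "\<not> (F (k - 1) < F m \<and> F m < F k)"
  using assms by (auto simp: strict_mono_less)

lemma neg_iff_between_alternating_zeros:
  fixes h :: "real \<Rightarrow> real" and F t :: "int \<Rightarrow> real"
  assumes cont: "continuous_on UNIV h"
    and zeros: "\<And>\<theta>. h \<theta> = 0 \<longleftrightarrow> (\<exists>k. \<theta> = F k)"
    and mono: "strict_mono F"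
    and interlace: "\<And>k. F (k - 1) < t k \<and> t k < F k"
    and sign: "\<And>k. h (t k) < 0 \<longleftrightarrow> even k"
    and cover: "\<And>\<theta>. \<exists>k. F (k - 1) \<le> \<theta> \<and> \<theta> \<le> F k"
  shows "h \<theta> < 0 \<longleftrightarrow> (\<exists>l. F (2*l - 1) < \<theta> \<and> \<theta> < F (2*l))"
proof -
  have gap_sign: "h \<theta> < 0 \<longleftrightarrow> even k" if \<theta>: "F (k - 1) < \<theta>" "\<theta> < F k" for \<theta> k
  proof -
    have no_zero: "h s \<noteq> 0" if "F (k - 1) < s" "s < F k" for s
      using that zeros[of s] strict_mono_no_value_between[OF mono, of k] by auto
    have "h (min \<theta> (t k)) < 0 \<longleftrightarrow> h (max \<theta> (t k)) < 0"
      by (rule continuous_on_nonzero_neg_iff)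
        (use cont \<theta> interlace[of k] no_zero in \<open>auto intro: continuous_on_subset\<close>)
    then show ?thesis
      using sign[of k] by (cases "\<theta> \<le> t k") (auto simp: min_def max_def)
  qed
  have gap_unique: "j = k" if "F (j - 1) < \<theta>" "\<theta> < F j" "F (k - 1) < \<theta>" "\<theta> < F k" for j k
  proof -
    have "j - 1 < k" "k - 1 < j"
      using that strict_mono_less[OF mono] by (meson less_trans)+
    then show ?thesis by simp
  qed
  obtain k where k: "F (k - 1) \<le> \<theta>" "\<theta> \<le> F k"
    using cover by blast
  show ?thesis
  proof (cases "\<theta> = F (k - 1) \<or> \<theta> = F k")
    case True
    then have "h \<theta> = 0"
      using zeros by blast
    moreover have "\<not> (F (2*l - 1) < \<theta> \<and> \<theta> < F (2*l))" for l
      using True strict_mono_no_value_between[OF mono, of "2*l"] by auto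
    ultimately show ?thesis by auto
  next
    case False
    with k have "F (k - 1) < \<theta>" "\<theta> < F k" by auto
    with gap_sign gap_unique show ?thesis
      by (metis evenE dvd_triv_left)
  qed
qed

lemma banded_interlace:
  fixes F :: "int \<Rightarrow> real"
  assumes "c > 0" and band: "\<And>l. \<bar>F l - (a + c * (of_int l + 1/2))\<bar> \<le> c / 4"
  shows "F (k - 1) < a + c * of_int k" "a + c * of_int k < F k"
  using assms(1) abs_le_D2[OF band[of k]] abs_le_D1[OF band[of "k - 1"]]
  by (simp_all add: algebra_simps)

lemma banded_strict_mono:
  fixes F :: "int \<Rightarrow> real"
  assumes "c > 0" and "\<And>l. \<bar>F l - (a + c * (of_int l + 1/2))\<bar> \<le> c / 4"
  shows "strict_mono F"
proof (rule strict_monoI)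
  fix m n :: int
  assume "m < n"
  then have "c * of_int (m + 1) \<le> c * of_int n"
    using \<open>c > 0\<close> by simp
  with banded_interlace[OF assms, of "m + 1"] banded_interlace[OF assms, of n]
  show "F m < F n" by simp
qed

lemma banded_cover:
  fixes F :: "int \<Rightarrow> real"
  assumes "c > 0" and "\<And>l. \<bar>F l - (a + c * (of_int l + 1/2))\<bar> \<le> c / 4"
  shows "\<exists>k. F (k - 1) \<le> \<theta> \<and> \<theta> \<le> F k"
proof -
  define j where "j = \<lfloor>(\<theta> - a) / c\<rfloor>"
  have "of_int j \<le> (\<theta> - a) / c" "(\<theta> - a) / c < of_int (j + 1)"
    unfolding j_def by linarith+
  then have j: "a + c * of_int j \<le> \<theta>" "\<theta> < a + c * of_int (j + 1)"
    using \<open>c > 0\<close> by (simp_all add: field_simps)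
  show ?thesis
  proof (cases "\<theta> \<le> F j")
    case True
    then show ?thesis
      using j banded_interlace(1)[OF assms, of j] by (intro exI[of _ j]) simp
  next
    case False
    then show ?thesis
      using j banded_interlace(2)[OF assms, of "j + 1"] by (intro exI[of _ "j + 1"]) simp
  qed
qed

lemma rescaled_re_factorization:
  assumes rep: "\<forall>z\<in>B. p z = p z0 - p0 * (z - z0) ^ \<mu> * (1 - \<phi> z)" and "\<phi> z0 = 0"
    and inB: "z0 + complex_of_real r * exp (\<i> * complex_of_real \<theta>) \<in> B"
  shows "rescaled_re p z0 p0 \<mu> r \<theta> = - Re (p0 * exp (\<i> * complex_of_real \<theta>) ^ \<mu> *
           (1 - \<phi> (z0 + complex_of_real r * exp (\<i> * complex_of_real \<theta>))))"
proof (cases "r = 0")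
  case True
  have "p0 * exp (\<i> * complex_of_real \<theta>) ^ \<mu> = rcis (cmod p0) (Arg p0) * cis \<theta> ^ \<mu>"
    by (simp add: rcis_cmod_Arg cis_conv_exp)
  also have "\<dots> = complex_of_real (cmod p0) * cis (Arg p0 + real \<mu> * \<theta>)"
    by (subst Complex.DeMoivre) (simp only: rcis_def mult.assoc cis_mult)
  finally show ?thesis
    using True \<open>\<phi> z0 = 0\<close> by (simp add: rescaled_re_def)
next
  case False
  let ?e = "exp (\<i> * complex_of_real \<theta>)"
  let ?z = "z0 + complex_of_real r * ?e"
  have "p ?z = p z0 - p0 * (?z - z0) ^ \<mu> * (1 - \<phi> ?z)"
    using rep inB by blast
  moreover have "(?z - z0) ^ \<mu> = complex_of_real (r ^ \<mu>) * ?e ^ \<mu>"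
    by (simp add: power_mult_distrib)
  ultimately have "p ?z - p z0 = - (complex_of_real (r ^ \<mu>) * (p0 * ?e ^ \<mu> * (1 - \<phi> ?z)))"
    by (simp add: algebra_simps)
  then show ?thesis
    using False by (simp add: rescaled_re_def)
qed

lemma rescaled_re_origin_neg_iff:
  assumes "p0 \<noteq> 0" "\<mu> > 0"
  shows "rescaled_re p z0 p0 \<mu> 0 (- Arg p0 / real \<mu> + pi / real \<mu> * of_int k) < 0 \<longleftrightarrow> even k"
proof -
  have "Arg p0 + real \<mu> * (- Arg p0 / real \<mu> + pi / real \<mu> * of_int k) = pi * of_int k"
    using \<open>\<mu> > 0\<close> by (simp add: field_simps)
  then have "rescaled_re p z0 p0 \<mu> 0 (- Arg p0 / real \<mu> + pi / real \<mu> * of_int k)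
      = - cmod p0 * (if even k then 1 else -1)"
    by (simp add: rescaled_re_def cos_npi_int)
  then show ?thesis
    using \<open>p0 \<noteq> 0\<close> by simp
qed

lemma Re_diff_neg_iff_rescaled_re_neg:
  assumes "r > 0"
  shows "Re (p (z0 + complex_of_real r * exp (\<i> * complex_of_real \<theta>)) - p z0) < 0
           \<longleftrightarrow> rescaled_re p z0 p0 \<mu> r \<theta> < 0"
  using assms by (simp add: rescaled_re_def divide_less_0_iff)

context
  fixes p \<phi> :: "complex \<Rightarrow> complex" and B :: "complex set" and z0 p0 :: complex
    and \<mu> :: nat and R :: real
  assumes rep: "\<forall>z\<in>B. p z = p z0 - p0 * (z - z0) ^ \<mu> * (1 - \<phi> z)" and "\<phi> z0 = 0"
    and "continuous_on B \<phi>" and "cball z0 R \<subseteq> B"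
begin

lemma continuous_on_rescaled_re:
  "continuous_on ({0..R} \<times> UNIV) (\<lambda>x. rescaled_re p z0 p0 \<mu> (fst x) (snd x))"
proof -
  let ?z = "\<lambda>x. z0 + complex_of_real (fst x) * exp (\<i> * complex_of_real (snd x))"
  have inB: "?z x \<in> B" if "x \<in> {0..R} \<times> UNIV" for x
    using that \<open>cball z0 R \<subseteq> B\<close> by (auto simp: dist_norm norm_mult subset_iff)
  have "continuous_on ({0..R} \<times> UNIV) (\<lambda>x. \<phi> (?z x))"
    by (rule continuous_on_compose2[OF \<open>continuous_on B \<phi>\<close>])
      (auto intro!: continuous_intros inB)
  then have "continuous_on ({0..R} \<times> UNIV)
      (\<lambda>x. - Re (p0 * exp (\<i> * complex_of_real (snd x)) ^ \<mu> * (1 - \<phi> (?z x))))"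
    by (intro continuous_intros)
  then show ?thesis
    by (rule continuous_on_cong[THEN iffD1, rotated 2])
      (use rescaled_re_factorization[OF rep \<open>\<phi> z0 = 0\<close> inB] in auto)
qed

lemma continuous_on_rescaled_re_angle:
  assumes "r \<in> {0..R}"
  shows "continuous_on UNIV (rescaled_re p z0 p0 \<mu> r)"
  using continuous_on_compose2[OF continuous_on_rescaled_re, of UNIV "\<lambda>\<theta>. (r, \<theta>)"] assms
  by (simp add: image_subset_iff continuous_on_Pair continuous_on_id continuous_on_const)

lemma continuous_on_rescaled_re_radius:
  assumes "r \<le> R"
  shows "continuous_on {0..r} (\<lambda>s. rescaled_re p z0 p0 \<mu> s \<theta>)"
  using continuous_on_compose2[OF continuous_on_rescaled_re, of "{0..r}" "\<lambda>s. (s, \<theta>)"] assms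
  by (simp add: image_subset_iff continuous_on_Pair continuous_on_id continuous_on_const)

lemma rescaled_re_neg_iff_even:
  assumes "p0 \<noteq> 0" "\<mu> > 0" "r \<in> {0..R}"
    and nonzero: "\<And>s. s \<in> {0..R} \<Longrightarrow>
      rescaled_re p z0 p0 \<mu> s (- Arg p0 / real \<mu> + pi / real \<mu> * of_int k) \<noteq> 0"
  shows "rescaled_re p z0 p0 \<mu> r (- Arg p0 / real \<mu> + pi / real \<mu> * of_int k) < 0 \<longleftrightarrow> even k"
proof -
  let ?\<theta> = "- Arg p0 / real \<mu> + pi / real \<mu> * of_int k"
  have "rescaled_re p z0 p0 \<mu> 0 ?\<theta> < 0 \<longleftrightarrow> rescaled_re p z0 p0 \<mu> r ?\<theta> < 0"
    by (rule continuous_on_nonzero_neg_iff[where h = "\<lambda>s. rescaled_re p z0 p0 \<mu> s ?\<theta>"])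
      (use assms(3) nonzero continuous_on_rescaled_re_radius in auto)
  with rescaled_re_origin_neg_iff[OF assms(1,2)] show ?thesis by simp
qed

end

theorem corollary2p2:
  fixes p \<phi> :: "complex \<Rightarrow> complex" and B :: "complex set" and z0 p0 :: complex
    and \<mu> :: nat and R :: real and f :: "int \<Rightarrow> real \<Rightarrow> real"
  assumes B: "open B" "z0 \<in> B"
    and hol: "p holomorphic_on B" and nonconst: "\<not> (\<exists>c. \<forall>z\<in>B. p z = c)"
    and mu: "\<mu> \<ge> 1" and p0: "p0 \<noteq> 0"
    and phi: "\<phi> holomorphic_on B" "\<phi> z0 = 0"
    and rep: "\<forall>z\<in>B. p z = p z0 - p0 * (z - z0) ^ \<mu> * (1 - \<phi> z)"
    and R: "R > 0" "cball z0 R \<subseteq> B"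
    and f_diff: "\<forall>l::int. \<exists>I::real set. is_interval I \<and> {0..R} \<subseteq> I \<and> f l differentiable_on I"
    and f_0: "\<forall>l::int. f l 0 = - Arg p0 / real \<mu> + pi * (real_of_int l + 1/2) / real \<mu>"
    and f_bound: "\<forall>l::int. \<forall>r\<in>{0..R}.
        \<bar>f l r - (- Arg p0 / real \<mu> + pi * (real_of_int l + 1/2) / real \<mu>)\<bar> \<le> pi / (4 * real \<mu>)"
    and f_zeros: "\<forall>r\<in>{0..R}. \<forall>\<theta>::real.
        rescaled_re p z0 p0 \<mu> r \<theta> = 0 \<longleftrightarrow> (\<exists>l::int. \<theta> = f l r)"
  shows "(\<forall>l::int. \<forall>r\<in>{0..R}.
            f (2*l - 1) r < - Arg p0 / real \<mu> + 2 * pi * real_of_int l / real \<mu> \<and>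
            - Arg p0 / real \<mu> + 2 * pi * real_of_int l / real \<mu> < f (2*l) r)
       \<and> (\<forall>l::int. \<forall>r\<in>{0<..R}.
            Re (p (z0 + complex_of_real r * exp (\<i> * complex_of_real
                  (- Arg p0 / real \<mu> + 2 * pi * real_of_int l / real \<mu>))) - p z0) < 0)
       \<and> (\<forall>r\<in>{0<..R}. \<forall>\<theta>::real.
            Re (p (z0 + complex_of_real r * exp (\<i> * complex_of_real \<theta>)) - p z0) < 0
            \<longleftrightarrow> (\<exists>l::int. f (2*l - 1) r < \<theta> \<and> \<theta> < f (2*l) r))"
proof -
  define t where "t k = - Arg p0 / real \<mu> + pi / real \<mu> * of_int k" for k :: int
  have "\<mu> > 0" "pi / real \<mu> > 0"
    using mu by auto
  note cont_phi = holomorphic_on_imp_continuous_on[OF phi(1)]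
  have band: "\<bar>f l r - (- Arg p0 / real \<mu> + pi / real \<mu> * (of_int l + 1/2))\<bar> \<le> pi / real \<mu> / 4"
    if "r \<in> {0..R}" for l r
    using f_bound that by (simp add: field_simps)
  note banded = banded_strict_mono banded_interlace banded_cover
  have gaps: "strict_mono (\<lambda>l. f l r)" "f (k - 1) r < t k" "t k < f k r"
    "\<exists>k. f (k - 1) r \<le> \<theta> \<and> \<theta> \<le> f k r" if "r \<in> {0..R}" for r k \<theta>
    using banded[OF \<open>pi / real \<mu> > 0\<close> band[OF that]] by (simp_all add: t_def)
  have sample_sign: "rescaled_re p z0 p0 \<mu> r (t k) < 0 \<longleftrightarrow> even k" if "r \<in> {0..R}" for r k
    unfolding t_def
  proof (rule rescaled_re_neg_iff_even[OF rep phi(2) cont_phi R(2) p0 \<open>\<mu> > 0\<close> that])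
    fix s :: real
    assume s: "s \<in> {0..R}"
    show "rescaled_re p z0 p0 \<mu> s (- Arg p0 / real \<mu> + pi / real \<mu> * of_int k) \<noteq> 0"
      using f_zeros s gaps(2,3)[OF s, of k] strict_mono_no_value_between[OF gaps(1)[OF s], of k]
      unfolding t_def by auto
  qed
  have neg_iff: "rescaled_re p z0 p0 \<mu> r \<theta> < 0 \<longleftrightarrow> (\<exists>l. f (2*l - 1) r < \<theta> \<and> \<theta> < f (2*l) r)"
    if "r \<in> {0..R}" for r \<theta>
    by (rule neg_iff_between_alternating_zeros[where t = t])
      (use that continuous_on_rescaled_re_angle[OF rep phi(2) cont_phi R(2)] f_zeros gaps sample_sign
        in auto)
  have t_even: "t (2*l) = - Arg p0 / real \<mu> + 2 * pi * real_of_int l / real \<mu>" for l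
    by (simp add: t_def)
  have in_even_gap: "\<exists>l'. f (2*l' - 1) r < t (2*l) \<and> t (2*l) < f (2*l') r" if "r \<in> {0..R}" for r l
    using gaps(2,3)[OF that, of "2*l"] by blast
  show ?thesis
    unfolding t_even[symmetric]
    using gaps(2,3) in_even_gap neg_iff
      Re_diff_neg_iff_rescaled_re_neg[of _ p z0 _ p0 \<mu>]
    by auto
qed

end
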